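(* Let $m,n$ be natural numbers. If the $n$-th term $G(n,m)$ of the Goodstein sequence $G(m)$ is $0$, then $n=2n_1$ for some natural number $n_1$, and $G(k,m)=n-k$ for all $k$ with $n_1\le k<n$.
   Context: For a natural number base $b>1$, the hereditary representation $m\langle b\rangle$ of $m$ is $\sum_{i=0}^{l} a_i b^{i}$ with $0\le a_i<b$, $a_l\ne0$, each exponent itself written in hereditary representation in base $b$, recursively. $m\langle b\rangle''$ is obtained by syntactically replacing every $b$ by $b+1$ in $m\langle b\rangle$. The Goodstein sequence $G(m)=\{m, m''-1, (m''-1)''-1,\dots\}$ starts from $m$ in base $2$; its $n$-th term is $G(n,m)$, with $G(1,m)=m$ in base $2$, $G(k,m)$ written in base $k+1$, and $G(k+1,m)=G(k,m)\langle k+1\rangle''-1$. *)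

theory Defs
  imports Main
begin

text \<open>Value of m<b>'' : write m in hereditary base-b representation
  m = sum_i a_i b^i (0 <= a_i < b, exponents i again hereditary), and replace
  every b by b+1.  The i-th digit is (m div b^i) mod b; for b >= 2 all nonzero
  digits have index i < m, so summing over i < m suffices.\<close>

function hbump :: "nat \<Rightarrow> nat \<Rightarrow> nat" where
  "hbump b m = (\<Sum>i<m. ((m div b ^ i) mod b) * (b + 1) ^ (hbump b i))"
  by pat_completeness auto
termination by (relation "measure snd") simp_all

declare hbump.simps [simp del]

text \<open>Goodstein sequence: goodstein n m = G(n,m), with G(1,m) = m and
  G(k+1,m) = G(k,m)<k+1>'' - 1 (for k >= 1).  The value at n = 0 is a
  meaningless dummy.\<close>

fun goodstein :: "nat \<Rightarrow> nat \<Rightarrow> nat" where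
  "goodstein 0 m = m"
| "goodstein (Suc 0) m = m"
| "goodstein (Suc (Suc k)) m = hbump (Suc (Suc k)) (goodstein (Suc k) m) - 1"

end

theory Submission
  imports Defs
begin

text \<open>While G(k,m) > k, its leading term in base k+1 becomes at least k+2 after the
  bump, so G(k+1,m) \<ge> k+1. Once G(k,m) \<le> k, the number is a single digit, the
  bump fixes it, and the sequence counts down by one per step. Hence the first k with
  G(k,m) \<le> k satisfies G(k,m) = k exactly, after which G(k+j,m) = k-j, which first
  vanishes at j = k.\<close>

lemma hbump_0 [simp]: "hbump b 0 = 0"
  by (simp add: hbump.simps[of b 0])

lemma hbump_digit:
  assumes "x < b"
  shows "hbump b x = x"
proof (cases "x = 0")
  case False
  have "hbump b x = (\<Sum>i<x. ((x div b ^ i) mod b) * (b + 1) ^ hbump b i)"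
    by (rule hbump.simps)
  also have "\<dots> = (\<Sum>i\<in>{0}. ((x div b ^ i) mod b) * (b + 1) ^ hbump b i)"
  proof (rule sum.mono_neutral_right)
    show "\<forall>i\<in>{..<x} - {0}. (x div b ^ i) mod b * (b + 1) ^ hbump b i = 0"
    proof
      fix i assume "i \<in> {..<x} - {0}"
      then have "b \<le> b ^ i"
        using assms power_increasing[of 1 i b] by simp
      then show "(x div b ^ i) mod b * (b + 1) ^ hbump b i = 0"
        using assms by simp
    qed
  qed (use False in auto)
  also have "\<dots> = x" using assms by simp
  finally show ?thesis .
qed simp

lemma hbump_ge_leading_term:
  assumes "b \<ge> 2" "b ^ i \<le> x" "x < b ^ Suc i"
  shows "(b + 1) ^ hbump b i \<le> hbump b x"
proof -
  have "i < 2 ^ i"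
    by (rule less_exp)
  also have "\<dots> \<le> x"
    using power_mono[of 2 b i] assms by simp
  finally have "i < x" .
  have "x div b ^ i < b"
    using assms(3) by (simp add: less_mult_imp_div_less mult.commute)
  moreover have "x div b ^ i \<ge> 1"
    using assms by (simp add: Suc_le_eq div_greater_zero_iff)
  ultimately have "(b + 1) ^ hbump b i \<le> ((x div b ^ i) mod b) * (b + 1) ^ hbump b i"
    by simp
  also have "\<dots> \<le> (\<Sum>j<x. ((x div b ^ j) mod b) * (b + 1) ^ hbump b j)"
    by (rule member_le_sum) (use \<open>i < x\<close> in auto)
  also have "\<dots> = hbump b x"
    by (rule hbump.simps[symmetric])
  finally show ?thesis .
qed

lemma hbump_pos:
  assumes "b \<ge> 2" "x \<ge> 1"
  shows "hbump b x \<ge> 1"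
proof -
  obtain i where "b ^ i \<le> x" "x < b ^ Suc i"
    using ex_power_ivl1[OF assms] by auto
  then have "(b + 1) ^ hbump b i \<le> hbump b x"
    using hbump_ge_leading_term assms(1) by blast
  then show ?thesis
    using one_le_power[of "b + 1" "hbump b i"] by linarith
qed

lemma hbump_ge_Suc_base:
  assumes "b \<ge> 2" "b \<le> x"
  shows "b + 1 \<le> hbump b x"
proof -
  obtain i where i: "b ^ i \<le> x" "x < b ^ Suc i"
    using ex_power_ivl1[OF assms(1), of x] assms by auto
  then have "i \<ge> 1"
    using assms by (cases i) auto
  then have "hbump b i \<ge> 1"
    using hbump_pos assms(1) by blast
  then have "b + 1 \<le> (b + 1) ^ hbump b i"
    using power_increasing[of 1 "hbump b i" "b + 1"] by simp
  also have "\<dots> \<le> hbump b x"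
    using hbump_ge_leading_term assms(1) i by blast
  finally show ?thesis .
qed

lemma goodstein_Suc:
  assumes "k \<ge> 1"
  shows "goodstein (Suc k) m = hbump (Suc k) (goodstein k m) - 1"
  using assms by (cases k) auto

lemma goodstein_Suc_if_le:
  assumes "goodstein k m \<le> k"
  shows "goodstein (Suc k) m = goodstein k m - 1"
proof (cases "k = 0")
  case False
  then show ?thesis
    using assms by (simp add: goodstein_Suc hbump_digit)
qed (use assms in simp)

lemma goodstein_Suc_ge_if_gt:
  assumes "k < goodstein k m"
  shows "Suc k \<le> goodstein (Suc k) m"
proof (cases "k = 0")
  case False
  then show ?thesis
    using assms hbump_ge_Suc_base[of "Suc k" "goodstein k m"] by (simp add: goodstein_Suc)
qed (use assms in simp)

lemma goodstein_countdown:
  assumes "goodstein k m = k"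
  shows "goodstein (k + j) m = k - j"
proof (induction j)
  case (Suc j)
  then have "goodstein (Suc (k + j)) m = goodstein (k + j) m - 1"
    by (simp add: goodstein_Suc_if_le)
  with Suc show ?case by simp
qed (simp add: assms)

text \<open>The dummy value G(0,m) = m > 0 makes the least k with G(k,m) \<le> k positive.\<close>

lemma goodstein_hits_diagonal:
  assumes "m \<ge> 1" "goodstein n m \<le> n"
  obtains k where "1 \<le> k" "k \<le> n" "goodstein k m = k"
proof -
  define k where "k = (LEAST k. goodstein k m \<le> k)"
  have "goodstein k m \<le> k" "k \<le> n"
    unfolding k_def using assms(2) by (auto intro: LeastI Least_le)
  moreover have "k \<noteq> 0"
    using \<open>goodstein k m \<le> k\<close> assms(1) by (cases k) auto
  then obtain j where j: "k = Suc j"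
    using not0_implies_Suc by blast
  then have "j < goodstein j m"
    using not_less_Least[of j "\<lambda>k. goodstein k m \<le> k"] unfolding k_def by simp
  then have "k \<le> goodstein k m"
    using goodstein_Suc_ge_if_gt j by blast
  ultimately show ?thesis
    using that[of k] j by simp
qed

theorem corollary6p1:
  fixes m n :: nat
  assumes "1 \<le> m" and "1 \<le> n"
    and "goodstein n m = 0"
    and "\<forall>k. 1 \<le> k \<and> k < n \<longrightarrow> goodstein k m \<noteq> 0"
  shows "\<exists>n1. n = 2 * n1 \<and> (\<forall>k. n1 \<le> k \<and> k < n \<longrightarrow> goodstein k m = n - k)"
proof -
  obtain k0 where k0: "1 \<le> k0" "k0 \<le> n" "goodstein k0 m = k0"
    using goodstein_hits_diagonal[OF assms(1), of n] assms(3) by auto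
  note countdown = goodstein_countdown[OF k0(3)]
  have "n = 2 * k0"
  proof (rule ccontr)
    assume "n \<noteq> 2 * k0"
    then show False
    proof (cases "n < 2 * k0")
      case True
      then show False
        using countdown[of "n - k0"] k0(2) assms(3) by simp
    next
      case False
      then show False
        using countdown[of k0] k0(1) \<open>n \<noteq> 2 * k0\<close> assms(4) by (simp add: mult_2)
    qed
  qed
  moreover have "goodstein k m = n - k" if "k0 \<le> k" "k < n" for k
    using countdown[of "k - k0"] that \<open>n = 2 * k0\<close> by simp
  ultimately show ?thesis by blast
qed

end
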